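(* Let $\mathcal P$ be a Datalog program with negation, viewed as a program over Belnap's bilattice $\mathcal{FOUR}$ whose rules have the form $A\leftarrow (L_{1,1}\wedge\dots\wedge L_{1,n_1})\vee\dots\vee(L_{k,1}\wedge\dots\wedge L_{k,n_k})$ with the $L_{p,q}$ ground literals. (1) If $H_{\mathcal F}$ is the everywhere false hypothesis ($H_{\mathcal F}(A)=\mathcal F$ for all $A$), then $sem^{H_{\mathcal F}}_{\mathcal P}$ coincides with the well-founded semantics of $\mathcal P$. (2) If $H_{\mathcal U}$ is the everywhere underdefined hypothesis ($H_{\mathcal U}(A)=\mathcal U$ for all $A$), then $sem^{H_{\mathcal U}}_{\mathcal P}$ coincides with the Kripke–Kleene semantics of $\mathcal P$.
   Context: $\mathcal{FOUR}=\{\mathcal F,\mathcal T,\mathcal U,\mathcal O\}$ with knowledge order $\mathcal U\le_k\mathcal F,\mathcal T\le_k\mathcal O$ and truth order $\mathcal F\le_t\mathcal U,\mathcal O\le_t\mathcal T$; $\wedge,\vee$ are meet/join for $\le_t$, $\otimes,\oplus$ meet/join for $\le_k$; $\neg\mathcal T=\mathcal F$, $\neg\mathcal F=\mathcal T$, $\neg\mathcal U=\mathcal U$, $\neg\mathcal O=\mathcal O$. A program $\mathcal P=\langle F,R\rangle$ consists of a function $F:\mathcal{HB}_{\mathcal P}\to\mathcal{FOUR}$ (the facts) and a finite set $R$ of ground clauses $A\leftarrow B$, each ground atom the head of at most one clause; $Head$ is the set of heads. An interpretation is a function $\mathcal{HB}_{\mathcal P}\to\mathcal{FOUR}$, extended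 to formulas by $I(\neg A)=\neg I(A)$, $I(X\wedge Y)=I(X)\wedge I(Y)$, $I(X\vee Y)=I(X)\vee I(Y)$. Operations on interpretations are pointwise. $I,J$ are compatible if $I(A)\neq\mathcal U\neq J(A)$ implies $I(A)=J(A)$; $I\le J$ means $I(A)\neq\mathcal U\Rightarrow I(A)=J(A)$ for all $A$. $B\equiv_I\alpha$ means $J(B)=\alpha$ for all $J$ with $I\le J$. $T_R(I)(A)=\alpha$ if there is a clause $A\leftarrow B$ in $R$ with $B\equiv_I\alpha$, and $\mathcal U$ otherwise. For a program $\mathcal Q=\langle G,R\rangle$ and hypothesis $H$, $H'$ is sound w.r.t. $\mathcal Q$ if $G,H'$ are compatible and $H'_{/Head}\le T_R(G\oplus H')$ (where $I_{/S}$ is $I$ on $S$ and $\mathcal U$ elsewhere); the support $s^H_{\mathcal Q}$ is the maximal (w.r.t. $\le$) sound $H'\le H$. The $H$-founded semantics $sem^H_{\mathcal P}$ is the limit of the $\le$-increasing sequence $F_0=F$, $F_{n+1}=T_R(F_n)\oplus s^H_{\langle F_n,R\rangle}$. Interpretations with values in $\{\mathcal F,\mathcal T,\mathcal U\}$ are identified with partial interpretations (consistent sets of ground literals) via $I\mapsto\{A\mid I(A)=\mathcal T\}\cup\{\neg A\mid I(A)=\mathcal F\}$. Well-founded semantics (Van Gelder–Ross–Schlipf): for a partial interpretation $I$, $T_P(I)$ is the set of heads of rules all of whose body literals are in $I$; a set $U$ of ground atoms is unfounded w.r.t. $I$ if for every $A\in U$ and every rule with head $A$, some body literal $B$ has $\neg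 B\in I$ or $B\in U$; $U_P(I)$ is the greatest unfounded set; the well-founded semantics is the least fixpoint of $W_P(I)=T_P(I)\cup\neg U_P(I)$. Kripke–Kleene semantics (Fitting): $\Phi_{\mathcal P}(v)(A)=\mathcal T$ if there is a rule with head $A$ whose body is true under $v$; $=\mathcal F$ if there is a rule with head $A$ and all rules with head $A$ have body false under $v$; $=\mathcal U$ otherwise (three-valued Kleene evaluation); the Kripke–Kleene semantics is the fixpoint of $\Phi_{\mathcal P}$ obtained by iterating from the everywhere-$\mathcal U$ valuation (its $\le_k$-least fixpoint). *)

theory Defs
  imports Main
begin

datatype four = Fv | Tv | Uv | Ov

definition le_k :: "four \<Rightarrow> four \<Rightarrow> bool" where
  "le_k x y \<longleftrightarrow> x = y \<or> x = Uv \<or> y = Ov"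

definition le_t :: "four \<Rightarrow> four \<Rightarrow> bool" where
  "le_t x y \<longleftrightarrow> x = y \<or> x = Fv \<or> y = Tv"

fun meet_t :: "four \<Rightarrow> four \<Rightarrow> four" where
  "meet_t Fv _ = Fv" | "meet_t _ Fv = Fv"
| "meet_t Tv y = y" | "meet_t x Tv = x"
| "meet_t Uv Uv = Uv" | "meet_t Ov Ov = Ov"
| "meet_t Uv Ov = Fv" | "meet_t Ov Uv = Fv"

fun join_t :: "four \<Rightarrow> four \<Rightarrow> four" where
  "join_t Tv _ = Tv" | "join_t _ Tv = Tv"
| "join_t Fv y = y" | "join_t x Fv = x"
| "join_t Uv Uv = Uv" | "join_t Ov Ov = Ov"
| "join_t Uv Ov = Tv" | "join_t Ov Uv = Tv"

fun join_k :: "four \<Rightarrow> four \<Rightarrow> four" where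
  "join_k Ov _ = Ov" | "join_k _ Ov = Ov"
| "join_k Uv y = y" | "join_k x Uv = x"
| "join_k Tv Tv = Tv" | "join_k Fv Fv = Fv"
| "join_k Tv Fv = Ov" | "join_k Fv Tv = Ov"

fun neg4 :: "four \<Rightarrow> four" where
  "neg4 Tv = Fv" | "neg4 Fv = Tv" | "neg4 Uv = Uv" | "neg4 Ov = Ov"

datatype 'a fml = Atom 'a | Const four | Neg "'a fml" | And "'a fml" "'a fml" | Or "'a fml" "'a fml"

type_synonym 'a interp = "'a \<Rightarrow> four"

fun eval :: "'a interp \<Rightarrow> 'a fml \<Rightarrow> four" where
  "eval I (Atom A) = I A"
| "eval I (Const c) = c"
| "eval I (Neg X) = neg4 (eval I X)"
| "eval I (And X Y) = meet_t (eval I X) (eval I Y)"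
| "eval I (Or X Y) = join_t (eval I X) (eval I Y)"

definition joink_i :: "'a interp \<Rightarrow> 'a interp \<Rightarrow> 'a interp" where
  "joink_i I J = (\<lambda>A. join_k (I A) (J A))"

definition compatible :: "'a interp \<Rightarrow> 'a interp \<Rightarrow> bool" where
  "compatible I J \<longleftrightarrow> (\<forall>A. I A \<noteq> Uv \<and> J A \<noteq> Uv \<longrightarrow> I A = J A)"

definition le_i :: "'a interp \<Rightarrow> 'a interp \<Rightarrow> bool" where
  "le_i I J \<longleftrightarrow> (\<forall>A. I A \<noteq> Uv \<longrightarrow> I A = J A)"

definition fequiv :: "'a interp \<Rightarrow> 'a fml \<Rightarrow> four \<Rightarrow> bool" where
  "fequiv I B \<alpha> \<longleftrightarrow> (\<forall>J. le_i I J \<longrightarrow> eval J B = \<alpha>)"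

text \<open>Clauses: pairs (head, body). A program is \<open>\<langle>F,R\<rangle>\<close>.\<close>
type_synonym 'a clauses = "('a \<times> 'a fml) set"

definition heads :: "'a clauses \<Rightarrow> 'a set" where
  "heads R = fst ` R"

definition T_R :: "'a clauses \<Rightarrow> 'a interp \<Rightarrow> 'a interp" where
  "T_R R I A = (if \<exists>B \<alpha>. (A, B) \<in> R \<and> fequiv I B \<alpha>
                then (THE \<alpha>. \<exists>B. (A, B) \<in> R \<and> fequiv I B \<alpha>) else Uv)"

definition restrict_i :: "'a interp \<Rightarrow> 'a set \<Rightarrow> 'a interp" where
  "restrict_i I S = (\<lambda>A. if A \<in> S then I A else Uv)"

definition sound :: "'a interp \<Rightarrow> 'a clauses \<Rightarrow> 'a interp \<Rightarrow> bool" where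
  "sound G R H' \<longleftrightarrow> compatible G H' \<and> le_i (restrict_i H' (heads R)) (T_R R (joink_i G H'))"

definition support :: "'a interp \<Rightarrow> 'a clauses \<Rightarrow> 'a interp \<Rightarrow> 'a interp" where
  "support G R H = (THE H'. sound G R H' \<and> le_i H' H \<and>
                      (\<forall>H''. sound G R H'' \<and> le_i H'' H \<longrightarrow> le_i H'' H'))"

primrec hseq :: "'a interp \<Rightarrow> 'a clauses \<Rightarrow> 'a interp \<Rightarrow> nat \<Rightarrow> 'a interp" where
  "hseq F R H 0 = F"
| "hseq F R H (Suc n) = joink_i (T_R R (hseq F R H n)) (support (hseq F R H n) R H)"

text \<open>Limit of the (\<open>\<le>\<close>-increasing) sequence: pointwise, the value of an atom
  at the first stage where it becomes defined.\<close>
definition hsem :: "'a interp \<Rightarrow> 'a clauses \<Rightarrow> 'a interp \<Rightarrow> 'a interp" where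
  "hsem F R H = (\<lambda>A. if \<exists>n. hseq F R H n A \<noteq> Uv
                      then hseq F R H (LEAST n. hseq F R H n A \<noteq> Uv) A else Uv)"

datatype 'a lit = Pos 'a | NegL 'a

fun neg_lit :: "'a lit \<Rightarrow> 'a lit" where
  "neg_lit (Pos A) = NegL A" | "neg_lit (NegL A) = Pos A"

type_synonym 'a nprog = "('a \<times> 'a lit list) set"

fun lit_fml :: "'a lit \<Rightarrow> 'a fml" where
  "lit_fml (Pos A) = Atom A" | "lit_fml (NegL A) = Neg (Atom A)"

fun conj_fml :: "'a fml list \<Rightarrow> 'a fml" where
  "conj_fml [] = Const Tv" | "conj_fml (X # Xs) = And X (conj_fml Xs)"

fun disj_fml :: "'a fml list \<Rightarrow> 'a fml" where
  "disj_fml [] = Const Fv" | "disj_fml (X # Xs) = Or X (disj_fml Xs)"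

text \<open>The FOUR-program associated with a normal program: all rules with head A are
  merged into the single clause A <- (L11 and ... ) or ... or (Lk1 and ...);
  facts (empty bodies) become the empty conjunction (true).\<close>
definition bodies_list :: "'a nprog \<Rightarrow> 'a \<Rightarrow> 'a lit list list" where
  "bodies_list P A = (SOME bs. set bs = {b. (A, b) \<in> P})"

definition four_rules :: "'a nprog \<Rightarrow> 'a clauses" where
  "four_rules P = {(A, disj_fml (map (\<lambda>b. conj_fml (map lit_fml b)) (bodies_list P A))) | A. A \<in> fst ` P}"

definition four_facts :: "'a interp" where
  "four_facts = (\<lambda>_. Uv)"

definition TP :: "'a nprog \<Rightarrow> 'a lit set \<Rightarrow> 'a set" where
  "TP P I = {A. \<exists>body. (A, body) \<in> P \<and> (\<forall>L \<in> set body. L \<in> I)}"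

definition unfounded :: "'a nprog \<Rightarrow> 'a lit set \<Rightarrow> 'a set \<Rightarrow> bool" where
  "unfounded P I U \<longleftrightarrow> (\<forall>A \<in> U. \<forall>body. (A, body) \<in> P \<longrightarrow>
      (\<exists>L \<in> set body. neg_lit L \<in> I \<or> (\<exists>B. L = Pos B \<and> B \<in> U)))"

definition UP :: "'a nprog \<Rightarrow> 'a lit set \<Rightarrow> 'a set" where
  "UP P I = \<Union> {U. unfounded P I U}"

definition WP :: "'a nprog \<Rightarrow> 'a lit set \<Rightarrow> 'a lit set" where
  "WP P I = Pos ` TP P I \<union> NegL ` UP P I"

definition wfs :: "'a nprog \<Rightarrow> 'a lit set" where
  "wfs P = lfp (WP P)"

definition to_partial :: "'a interp \<Rightarrow> 'a lit set" where
  "to_partial I = {Pos A | A. I A = Tv} \<union> {NegL A | A. I A = Fv}"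

definition lit_val :: "'a interp \<Rightarrow> 'a lit \<Rightarrow> four" where
  "lit_val v L = (case L of Pos A \<Rightarrow> v A | NegL A \<Rightarrow> neg4 (v A))"

definition body_true :: "'a interp \<Rightarrow> 'a lit list \<Rightarrow> bool" where
  "body_true v body \<longleftrightarrow> (\<forall>L \<in> set body. lit_val v L = Tv)"

definition body_false :: "'a interp \<Rightarrow> 'a lit list \<Rightarrow> bool" where
  "body_false v body \<longleftrightarrow> (\<exists>L \<in> set body. lit_val v L = Fv)"

definition Phi :: "'a nprog \<Rightarrow> 'a interp \<Rightarrow> 'a interp" where
  "Phi P v A = (if \<exists>body. (A, body) \<in> P \<and> body_true v body then Tv
               else if (\<exists>body. (A, body) \<in> P) \<and> (\<forall>body. (A, body) \<in> P \<longrightarrow> body_false v body) then Fv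
               else Uv)"

definition kk :: "'a nprog \<Rightarrow> 'a interp" where
  "kk P = (THE v. Phi P v = v \<and> (\<forall>w. Phi P w = w \<longrightarrow> le_i v w))"

end

theory Submission
  imports Defs
begin

(* For a normal program, the merged FOUR-clause of an atom is settled by an interpretation
   without Ov exactly when Kleene's three-valued value of its bodies is defined, so on such
   interpretations T_R is Fitting's operator Phi.

   The support of the everywhere underdefined hypothesis is trivial, so the corresponding
   sequence is the Kripke-Kleene iteration of Phi from the empty interpretation.

   The hypotheses below the everywhere false one are "make the atoms of S false", and such a
   hypothesis is sound exactly when S is unsupported, a four-valued counterpart of an unfounded
   set; the support makes the union of all unsupported sets false. Each step of the resulting
   iteration lies inside W_P of the previous one, so all its literals are well-founded. Its
   limit M is a fixpoint, and no atom made true along the way lies in the greatest unfounded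
   set of M, so the literals of M are closed under W_P and contain the least fixpoint.

   Finiteness of the program bounds the number of atoms that can still change, so both
   iterations become stationary. *)

section \<open>Increasing chains of interpretations\<close>

lemma le_i_refl [simp]: "le_i I I"
  by (simp add: le_i_def)

lemma le_i_trans: "le_i I J \<Longrightarrow> le_i J K \<Longrightarrow> le_i I K"
  by (simp add: le_i_def)

lemma le_i_antisym: "le_i I J \<Longrightarrow> le_i J I \<Longrightarrow> I = J"
  unfolding le_i_def by (rule ext) metis

lemma le_iD: "le_i I J \<Longrightarrow> I A \<noteq> Uv \<Longrightarrow> J A = I A"
  by (simp add: le_i_def)

lemma le_i_Uv [simp]: "le_i (\<lambda>_. Uv) I"
  by (simp add: le_i_def)

lemma le_i_chain_le:
  assumes "\<And>n. le_i (f n) (f (Suc n))" and "n \<le> m"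
  shows "le_i (f n) (f m)"
  using assms(2) by (induction rule: dec_induct) (auto intro: le_i_trans assms(1))

lemma funpow_le_i_chain:
  assumes "le_i I (W I)" and "\<And>G. le_i G (W G) \<Longrightarrow> le_i (W G) (W (W G))"
  shows "le_i ((W ^^ n) I) ((W ^^ Suc n) I)"
  by (induction n) (simp_all add: assms)

lemma funpow_le_i_fixpoint_upper:
  assumes chain: "\<And>n. le_i ((W ^^ n) I) ((W ^^ Suc n) I)"
    and fixpoint: "W ((W ^^ N) I) = (W ^^ N) I"
  shows "le_i ((W ^^ m) I) ((W ^^ N) I)"
proof (cases "m \<le> N")
  case True
  show ?thesis
    using le_i_chain_le[where f = "\<lambda>n. (W ^^ n) I", OF chain True] .
next
  case False
  have "(W ^^ (k + N)) I = (W ^^ N) I" for k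
    by (induction k) (simp_all add: fixpoint)
  moreover from False have "m = (m - N) + N"
    by simp
  ultimately show ?thesis
    by (metis le_i_refl)
qed

text \<open>While the iteration moves, every step defines a new atom of \<open>D\<close>.\<close>
lemma funpow_le_i_reaches_fixpoint:
  fixes W :: "'a interp \<Rightarrow> 'a interp"
  assumes chain: "\<And>n. le_i ((W ^^ n) I) ((W ^^ Suc n) I)" and "finite D"
    and outside: "\<And>n A. A \<notin> D \<Longrightarrow> (W ^^ Suc n) I A = W I A"
  shows "\<exists>N. W ((W ^^ N) I) = (W ^^ N) I"
proof -
  let ?f = "\<lambda>n. (W ^^ n) I"
  define defined where "defined n = {A \<in> D. ?f (Suc n) A \<noteq> Uv}" for n
  have "\<exists>N. ?f (Suc (Suc N)) = ?f (Suc N)"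
  proof (rule ccontr)
    assume moving: "\<nexists>N. ?f (Suc (Suc N)) = ?f (Suc N)"
    have "defined n \<subset> defined (Suc n)" for n
    proof
      show "defined n \<subseteq> defined (Suc n)"
        using chain[of "Suc n"] unfolding defined_def le_i_def by auto
      obtain A where A: "?f (Suc (Suc n)) A \<noteq> ?f (Suc n) A"
        using moving by blast
      then have "?f (Suc n) A = Uv" "A \<in> D"
        using chain[of "Suc n"] outside by (metis le_i_def)+
      with A show "defined n \<noteq> defined (Suc n)"
        unfolding defined_def by auto
    qed
    then have grows: "card (defined n) < card (defined (Suc n))" for n
      using \<open>finite D\<close> by (intro psubset_card_mono) (auto simp: defined_def)
    have "n \<le> card (defined n)" for n
    proof (induction n)
      case (Suc n)
      then show ?case
        using grows[of n] by simp
    qed simp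
    moreover have "card (defined n) \<le> card D" for n
      using \<open>finite D\<close> by (intro card_mono) (auto simp: defined_def)
    ultimately show False
      by (metis Suc_n_not_le_n le_trans)
  qed
  then show ?thesis
    by (metis funpow.simps(2) o_apply)
qed

lemma hsem_eq_upper_stage:
  assumes upper: "\<And>n. le_i (hseq F R H n) (hseq F R H N)"
  shows "hsem F R H = hseq F R H N"
proof
  fix A
  show "hsem F R H A = hseq F R H N A"
  proof (cases "\<exists>n. hseq F R H n A \<noteq> Uv")
    case True
    then have "hseq F R H (LEAST n. hseq F R H n A \<noteq> Uv) A \<noteq> Uv"
      by (rule LeastI_ex)
    with True upper show ?thesis
      unfolding hsem_def le_i_def by simp
  next
    case False
    then show ?thesis
      unfolding hsem_def by simp
  qed
qed

section \<open>Evaluation of normal rule bodies\<close>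

lemma meet_t_Fv_right [simp]: "meet_t x Fv = Fv"
  by (cases x) auto

lemma meet_t_Tv_left [simp]: "meet_t Tv x = x"
  by (cases x) auto

lemma join_t_Fv_left [simp]: "join_t Fv x = x"
  by (cases x) auto

lemma join_t_Tv_right [simp]: "join_t x Tv = Tv"
  by (cases x) auto

lemma join_k_Uv_right [simp]: "join_k x Uv = x"
  by (cases x) auto

abbreviation dnf_fml :: "'a lit list list \<Rightarrow> 'a fml" where
  "dnf_fml bs \<equiv> disj_fml (map (\<lambda>b. conj_fml (map lit_fml b)) bs)"

lemma eval_lit_fml [simp]: "eval J (lit_fml L) = lit_val J L"
  by (cases L) (auto simp: lit_val_def)

lemma body_true_not_false: "body_true J b \<Longrightarrow> \<not> body_false J b"
  by (auto simp: body_true_def body_false_def)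

lemma eval_conj_true: "body_true J b \<Longrightarrow> eval J (conj_fml (map lit_fml b)) = Tv"
  by (induction b) (auto simp: body_true_def)

lemma eval_conj_false: "body_false J b \<Longrightarrow> eval J (conj_fml (map lit_fml b)) = Fv"
proof (induction b)
  case (Cons L b)
  then show ?case
    by (cases "lit_val J L = Fv") (auto simp: body_false_def)
qed (simp add: body_false_def)

lemma eval_dnf_true: "\<exists>b\<in>set bs. body_true J b \<Longrightarrow> eval J (dnf_fml bs) = Tv"
proof (induction bs)
  case (Cons b bs)
  then show ?case
    by (cases "body_true J b") (auto simp: eval_conj_true)
qed simp

lemma eval_dnf_false: "\<forall>b\<in>set bs. body_false J b \<Longrightarrow> eval J (dnf_fml bs) = Fv"
  by (induction bs) (auto simp: eval_conj_false)

lemma body_true_Cons [simp]: "body_true J (L # b) \<longleftrightarrow> lit_val J L = Tv \<and> body_true J b"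
  by (simp add: body_true_def)

lemma body_false_Cons [simp]: "body_false J (L # b) \<longleftrightarrow> lit_val J L = Fv \<or> body_false J b"
  by (simp add: body_false_def)

lemma eval_conj_three_valued:
  assumes "c = Uv \<or> c = Ov" and "\<And>A. J A \<in> {Fv, Tv, c}"
  shows "eval J (conj_fml (map lit_fml b)) =
    (if body_true J b then Tv else if body_false J b then Fv else c)"
proof (induction b)
  case (Cons L b)
  obtain A where "L = Pos A \<or> L = NegL A"
    by (cases L) auto
  moreover have "J A \<in> {Fv, Tv, c}"
    by (rule assms(2))
  ultimately have "lit_val J L \<in> {Fv, Tv, c}"
    using assms(1) by (auto simp: lit_val_def)
  then consider "lit_val J L = Fv" | "lit_val J L = Tv" | "lit_val J L = c"
    by blast
  then show ?case
  proof cases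
    case 3
    moreover have "c \<noteq> Tv" "c \<noteq> Fv" "meet_t c Tv = c" "meet_t c c = c"
      using assms(1) by auto
    ultimately show ?thesis
      using Cons.IH by (simp add: body_true_not_false)
  qed (simp_all add: Cons.IH)
qed (simp add: body_true_def body_false_def)

lemma eval_dnf_three_valued:
  assumes "c = Uv \<or> c = Ov" and "\<And>A. J A \<in> {Fv, Tv, c}"
  shows "eval J (dnf_fml bs) =
    (if \<exists>b\<in>set bs. body_true J b then Tv else if \<forall>b\<in>set bs. body_false J b then Fv else c)"
proof (induction bs)
  case (Cons b bs)
  consider "body_true J b" | "\<not> body_true J b" "body_false J b"
    | "\<not> body_true J b" "\<not> body_false J b"
    by blast
  then show ?case
  proof cases
    case 1
    then show ?thesis
      by (simp add: eval_conj_true)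
  next
    case 2
    then show ?thesis
      using Cons.IH by (simp add: eval_conj_false)
  next
    case 3
    then have "eval J (conj_fml (map lit_fml b)) = c"
      by (simp add: eval_conj_three_valued[OF assms])
    moreover have "join_t c Fv = c" "join_t c c = c"
      using assms(1) by auto
    ultimately show ?thesis
      using 3 Cons.IH by auto
  qed
qed simp

lemma neg4_eq_Uv_iff [simp]: "neg4 x = Uv \<longleftrightarrow> x = Uv"
  by (cases x) auto

lemma lit_val_mono: "le_i I J \<Longrightarrow> lit_val I L \<noteq> Uv \<Longrightarrow> lit_val J L = lit_val I L"
  by (cases L) (auto simp: lit_val_def le_i_def)

lemma body_true_mono: "le_i I J \<Longrightarrow> body_true I b \<Longrightarrow> body_true J b"
  by (auto simp: body_true_def lit_val_mono)

lemma body_false_mono: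
  assumes "le_i I J" and "body_false I b"
  shows "body_false J b"
proof -
  obtain L where L: "L \<in> set b" "lit_val I L = Fv"
    using assms(2) by (auto simp: body_false_def)
  with lit_val_mono[OF assms(1), of L] have "lit_val J L = Fv"
    by simp
  with L(1) show ?thesis
    by (auto simp: body_false_def)
qed

lemma fequiv_unique: "fequiv I B \<alpha> \<Longrightarrow> fequiv I B \<beta> \<Longrightarrow> \<alpha> = \<beta>"
  by (metis fequiv_def le_i_refl)

lemma fequiv_dnf_iff:
  assumes "\<And>A. I A \<noteq> Ov"
  shows "fequiv I (dnf_fml bs) \<alpha> \<longleftrightarrow> \<alpha> = eval I (dnf_fml bs) \<and> \<alpha> \<noteq> Uv"
proof
  assume settled: "fequiv I (dnf_fml bs) \<alpha>"
  define J where "J = (\<lambda>A. if I A = Uv then Tv else I A)"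
  have "le_i I J"
    by (simp add: J_def le_i_def)
  with settled have "eval J (dnf_fml bs) = \<alpha>"
    by (simp add: fequiv_def)
  moreover have "J A \<in> {Fv, Tv, Ov}" for A
    by (cases "I A") (auto simp: J_def)
  then have "eval J (dnf_fml bs) \<noteq> Uv"
    by (simp add: eval_dnf_three_valued[of Ov J bs])
  ultimately show "\<alpha> = eval I (dnf_fml bs) \<and> \<alpha> \<noteq> Uv"
    using settled by (simp add: fequiv_def)
next
  assume defined: "\<alpha> = eval I (dnf_fml bs) \<and> \<alpha> \<noteq> Uv"
  have "I A \<in> {Fv, Tv, Uv}" for A
    using assms by (cases "I A") auto
  then consider "\<exists>b\<in>set bs. body_true I b" "\<alpha> = Tv" | "\<forall>b\<in>set bs. body_false I b" "\<alpha> = Fv"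
    using defined eval_dnf_three_valued[of Uv I bs] by (auto split: if_splits)
  then show "fequiv I (dnf_fml bs) \<alpha>"
  proof cases
    case 1
    then have "eval J (dnf_fml bs) = \<alpha>" if "le_i I J" for J
      using that body_true_mono eval_dnf_true by blast
    then show ?thesis
      by (simp add: fequiv_def)
  next
    case 2
    then have "eval J (dnf_fml bs) = \<alpha>" if "le_i I J" for J
      using that body_false_mono eval_dnf_false by blast
    then show ?thesis
      by (simp add: fequiv_def)
  qed
qed

section \<open>The merged clauses compute Fitting's operator\<close>

lemma Phi_ne_Ov: "Phi P I A \<noteq> Ov"
  by (simp add: Phi_def)

lemma Phi_Tv_iff: "Phi P I A = Tv \<longleftrightarrow> (\<exists>b. (A, b) \<in> P \<and> body_true I b)"
  by (simp add: Phi_def)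

lemma Phi_Fv_iff:
  "Phi P I A = Fv \<longleftrightarrow> (\<exists>b. (A, b) \<in> P) \<and> (\<forall>b. (A, b) \<in> P \<longrightarrow> body_false I b)"
  unfolding Phi_def using body_true_not_false by auto

lemma Phi_nonhead: "A \<notin> fst ` P \<Longrightarrow> Phi P I A = Uv"
  unfolding Phi_def by force

lemma Phi_mono:
  assumes "le_i I J"
  shows "le_i (Phi P I) (Phi P J)"
  unfolding le_i_def
proof (intro allI impI)
  fix A
  assume "Phi P I A \<noteq> Uv"
  then consider "Phi P I A = Tv" | "Phi P I A = Fv"
    using Phi_ne_Ov[of P I A] by (cases "Phi P I A") auto
  then show "Phi P I A = Phi P J A"
  proof cases
    case 1
    then have "Phi P J A = Tv"
      using body_true_mono[OF assms] by (auto simp: Phi_Tv_iff)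
    with 1 show ?thesis
      by simp
  next
    case 2
    then have "Phi P J A = Fv"
      using body_false_mono[OF assms] by (auto simp: Phi_Fv_iff)
    with 2 show ?thesis
      by simp
  qed
qed

lemma set_bodies_list:
  assumes "finite P"
  shows "set (bodies_list P A) = {b. (A, b) \<in> P}"
proof -
  have "{b. (A, b) \<in> P} = snd ` (P \<inter> {p. fst p = A})"
    by force
  with assms have "\<exists>bs. set bs = {b. (A, b) \<in> P}"
    by (simp add: finite_list)
  then show ?thesis
    unfolding bodies_list_def by (rule someI_ex)
qed

lemma heads_four_rules [simp]: "heads (four_rules P) = fst ` P"
  unfolding heads_def four_rules_def by force

lemma four_rules_iff:
  "(A, B) \<in> four_rules P \<longleftrightarrow> A \<in> fst ` P \<and> B = dnf_fml (bodies_list P A)"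
  by (auto simp: four_rules_def)

lemma T_R_unique_clause:
  assumes "\<And>B. (A, B) \<in> R \<longleftrightarrow> B = B0"
  shows "T_R R I A = (if \<exists>\<alpha>. fequiv I B0 \<alpha> then THE \<alpha>. fequiv I B0 \<alpha> else Uv)"
  using assms by (auto simp: T_R_def)

lemma Phi_eq_eval_dnf:
  assumes "finite P" and "A \<in> fst ` P" and "\<And>A. I A \<noteq> Ov"
  shows "Phi P I A = eval I (dnf_fml (bodies_list P A))"
proof -
  have "I A \<in> {Fv, Tv, Uv}" for A
    using assms(3) by (cases "I A") auto
  then have "eval I (dnf_fml (bodies_list P A)) =
    (if \<exists>b. (A, b) \<in> P \<and> body_true I b then Tv
     else if \<forall>b. (A, b) \<in> P \<longrightarrow> body_false I b then Fv else Uv)"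
    by (simp add: eval_dnf_three_valued[of Uv I] set_bodies_list[OF assms(1)])
  moreover have "\<exists>b. (A, b) \<in> P"
    using assms(2) by force
  ultimately show ?thesis
    by (simp add: Phi_def)
qed

lemma T_R_four_rules:
  assumes "finite P" and "\<And>A. I A \<noteq> Ov"
  shows "T_R (four_rules P) I = Phi P I"
proof
  fix A
  show "T_R (four_rules P) I A = Phi P I A"
  proof (cases "A \<in> fst ` P")
    case True
    let ?B = "dnf_fml (bodies_list P A)"
    have "T_R (four_rules P) I A = (if \<exists>\<alpha>. fequiv I ?B \<alpha> then THE \<alpha>. fequiv I ?B \<alpha> else Uv)"
      using True by (intro T_R_unique_clause) (simp add: four_rules_iff)
    also have "\<dots> = eval I ?B"
    proof (cases "eval I ?B = Uv")
      case False
      then have "fequiv I ?B (eval I ?B)"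
        using fequiv_dnf_iff[of I, OF assms(2)] by blast
      then have "(THE \<alpha>. fequiv I ?B \<alpha>) = eval I ?B"
        using fequiv_unique by (intro the_equality) blast+
      with \<open>fequiv I ?B (eval I ?B)\<close> show ?thesis
        by auto
    qed (simp add: fequiv_dnf_iff[of I, OF assms(2)])
    finally show ?thesis
      using Phi_eq_eval_dnf[OF assms(1) True assms(2)] by simp
  next
    case False
    then show ?thesis
      by (simp add: T_R_def four_rules_iff Phi_nonhead)
  qed
qed

section \<open>The underdefined hypothesis: Kripke-Kleene semantics\<close>

lemma support_eqI:
  assumes "sound G R M" and "le_i M H" and "\<And>H'. sound G R H' \<Longrightarrow> le_i H' H \<Longrightarrow> le_i H' M"
  shows "support G R H = M"
  unfolding support_def using assms le_i_antisym by (intro the_equality) blast+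

lemma support_Uv: "support G R (\<lambda>_. Uv) = (\<lambda>_. Uv)"
  by (rule support_eqI) (auto simp: sound_def compatible_def le_i_def restrict_i_def)

lemma joink_i_Uv_right [simp]: "joink_i I (\<lambda>_. Uv) = I"
  by (simp add: joink_i_def)

lemma kk_eqI:
  assumes "Phi P M = M" and "\<And>w. Phi P w = w \<Longrightarrow> le_i M w"
  shows "kk P = M"
  unfolding kk_def using assms le_i_antisym by (intro the_equality) blast+

lemma Phi_iterate_le_fixpoint: "Phi P w = w \<Longrightarrow> le_i ((Phi P ^^ n) (\<lambda>_. Uv)) w"
  by (induction n) (auto dest: Phi_mono[of _ w P])

lemma hseq_Uv_eq_Phi_iterate:
  assumes "finite P"
  shows "hseq four_facts (four_rules P) (\<lambda>_. Uv) n = (Phi P ^^ n) (\<lambda>_. Uv)"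
proof (induction n)
  case (Suc n)
  have "(Phi P ^^ n) (\<lambda>_. Uv) A \<noteq> Ov" for A
    by (cases n) (simp_all add: Phi_ne_Ov)
  then show ?case
    by (simp add: Suc.IH support_Uv T_R_four_rules[OF assms])
qed (simp add: four_facts_def)

lemma hsem_Uv_eq_kk:
  assumes "finite P"
  shows "hsem four_facts (four_rules P) (\<lambda>_. Uv) = kk P"
proof -
  let ?f = "\<lambda>n. (Phi P ^^ n) (\<lambda>_. Uv)"
  have chain: "le_i (?f n) (?f (Suc n))" for n
    by (rule funpow_le_i_chain) (simp_all add: Phi_mono)
  have "(Phi P ^^ Suc n) (\<lambda>_. Uv) A = Phi P (\<lambda>_. Uv) A" if "A \<notin> fst ` P" for n A
    using that by (simp add: Phi_nonhead)
  with chain obtain N where fixpoint: "Phi P (?f N) = ?f N"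
    using funpow_le_i_reaches_fixpoint[where D = "fst ` P"] assms by blast
  have upper: "le_i (?f m) (?f N)" for m
    using funpow_le_i_fixpoint_upper[OF chain fixpoint] .
  from fixpoint have "kk P = ?f N"
    by (intro kk_eqI Phi_iterate_le_fixpoint)
  moreover have "hsem four_facts (four_rules P) (\<lambda>_. Uv) = ?f N"
    using hsem_eq_upper_stage[of four_facts "four_rules P" "\<lambda>_. Uv" N] upper
    by (simp add: hseq_Uv_eq_Phi_iterate[OF assms])
  ultimately show ?thesis
    by simp
qed

section \<open>The false hypothesis: well-founded semantics\<close>

definition false_on :: "'a set \<Rightarrow> 'a interp" where
  "false_on S = (\<lambda>A. if A \<in> S then Fv else Uv)"

lemma le_i_Fv_iff: "le_i H (\<lambda>_. Fv) \<longleftrightarrow> H = false_on {A. H A = Fv}"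
  by (auto simp: le_i_def false_on_def fun_eq_iff)

lemma compatible_false_on_iff: "compatible G (false_on S) \<longleftrightarrow> (\<forall>A\<in>S. G A = Uv \<or> G A = Fv)"
  by (auto simp: compatible_def false_on_def)

lemma le_i_false_on: "S \<subseteq> T \<Longrightarrow> le_i (false_on S) (false_on T)"
  by (auto simp: le_i_def false_on_def)

lemma le_i_restrict_false_on_iff:
  "le_i (restrict_i (false_on S) H) J \<longleftrightarrow> (\<forall>A\<in>S \<inter> H. J A = Fv)"
  by (auto simp: le_i_def restrict_i_def false_on_def)

lemma joink_i_false_on:
  "\<forall>A\<in>S. G A = Uv \<or> G A = Fv \<Longrightarrow> joink_i G (false_on S) = (\<lambda>A. if A \<in> S then Fv else G A)"
  by (auto simp: joink_i_def false_on_def fun_eq_iff)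

text \<open>The sets \<open>S\<close> for which the hypothesis \<open>false_on S\<close> is sound (see
  \<open>sound_false_on_iff\<close>): a four-valued counterpart of unfounded sets.\<close>
definition unsupported :: "'a nprog \<Rightarrow> 'a interp \<Rightarrow> 'a set \<Rightarrow> bool" where
  "unsupported P G S \<longleftrightarrow> (\<forall>A\<in>S. G A = Uv \<or> G A = Fv) \<and>
     (\<forall>A\<in>S \<inter> fst ` P. Phi P (\<lambda>B. if B \<in> S then Fv else G B) A = Fv)"

definition greatest_unsupported :: "'a nprog \<Rightarrow> 'a interp \<Rightarrow> 'a set" where
  "greatest_unsupported P G = \<Union> {S. unsupported P G S}"

lemma sound_false_on_iff:
  assumes "finite P" and "\<And>A. G A \<noteq> Ov"
  shows "sound G (four_rules P) (false_on S) \<longleftrightarrow> unsupported P G S"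
proof (cases "\<forall>A\<in>S. G A = Uv \<or> G A = Fv")
  case True
  let ?G' = "\<lambda>B. if B \<in> S then Fv else G B"
  have "?G' A \<noteq> Ov" for A
    using assms(2) by simp
  then have "T_R (four_rules P) (joink_i G (false_on S)) = Phi P ?G'"
    using True by (simp add: joink_i_false_on T_R_four_rules[OF assms(1)])
  with True show ?thesis
    by (simp add: sound_def unsupported_def compatible_false_on_iff le_i_restrict_false_on_iff)
next
  case False
  then show ?thesis
    by (auto simp: sound_def unsupported_def compatible_false_on_iff)
qed

lemma unsupported_Union:
  assumes "\<And>S. S \<in> \<S> \<Longrightarrow> unsupported P G S"
  shows "unsupported P G (\<Union>\<S>)"
  unfolding unsupported_def
proof (intro conjI ballI)
  fix A
  assume "A \<in> \<Union>\<S>"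
  with assms show "G A = Uv \<or> G A = Fv"
    unfolding unsupported_def by blast
next
  fix A
  assume "A \<in> \<Union>\<S> \<inter> fst ` P"
  then obtain S where S: "S \<in> \<S>" "A \<in> S" "A \<in> fst ` P"
    by blast
  with assms have "Phi P (\<lambda>B. if B \<in> S then Fv else G B) A = Fv"
    unfolding unsupported_def by blast
  moreover have "le_i (\<lambda>B. if B \<in> S then Fv else G B) (\<lambda>B. if B \<in> \<Union>\<S> then Fv else G B)"
    using assms S(1) unfolding le_i_def unsupported_def by auto
  ultimately show "Phi P (\<lambda>B. if B \<in> \<Union>\<S> then Fv else G B) A = Fv"
    using le_iD[OF Phi_mono, of _ _ P A] by simp
qed

lemma unsupported_greatest: "unsupported P G (greatest_unsupported P G)"
  unfolding greatest_unsupported_def by (rule unsupported_Union) simp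

lemma unsupported_subset_greatest: "unsupported P G S \<Longrightarrow> S \<subseteq> greatest_unsupported P G"
  unfolding greatest_unsupported_def by blast

lemma Phi_on_unsupported:
  assumes "unsupported P G S" and "A \<in> S"
  shows "Phi P G A = Uv \<or> Phi P G A = Fv"
proof (cases "A \<in> fst ` P")
  case True
  with assms have "Phi P (\<lambda>B. if B \<in> S then Fv else G B) A = Fv"
    by (simp add: unsupported_def)
  moreover have "le_i G (\<lambda>B. if B \<in> S then Fv else G B)"
    using assms(1) by (auto simp: unsupported_def le_i_def)
  ultimately show ?thesis
    using le_iD[OF Phi_mono, of _ _ P A] by fastforce
qed (simp add: Phi_nonhead)

lemma support_Fv:
  assumes "finite P" and "\<And>A. G A \<noteq> Ov"
  shows "support G (four_rules P) (\<lambda>_. Fv) = false_on (greatest_unsupported P G)"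
proof (rule support_eqI)
  show "sound G (four_rules P) (false_on (greatest_unsupported P G))"
    using sound_false_on_iff[of P G, OF assms] unsupported_greatest by blast
  show "le_i (false_on (greatest_unsupported P G)) (\<lambda>_. Fv)"
    by (simp add: le_i_def false_on_def)
next
  fix H
  assume sound: "sound G (four_rules P) H" and "le_i H (\<lambda>_. Fv)"
  define S where "S = {A. H A = Fv}"
  have H: "H = false_on S"
    using \<open>le_i H (\<lambda>_. Fv)\<close> le_i_Fv_iff unfolding S_def by blast
  have "sound G (four_rules P) (false_on S)"
    using sound unfolding H .
  then have "S \<subseteq> greatest_unsupported P G"
    unfolding sound_false_on_iff[of P G, OF assms] by (rule unsupported_subset_greatest)
  then show "le_i H (false_on (greatest_unsupported P G))"
    unfolding H by (rule le_i_false_on)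
qed

definition wf_step :: "'a nprog \<Rightarrow> 'a interp \<Rightarrow> 'a interp" where
  "wf_step P G = (\<lambda>A. if A \<in> greatest_unsupported P G then Fv else Phi P G A)"

lemma wf_step_ne_Ov: "wf_step P G A \<noteq> Ov"
  by (simp add: wf_step_def Phi_ne_Ov)

lemma wf_step_unsupported: "A \<in> greatest_unsupported P G \<Longrightarrow> wf_step P G A = Fv"
  by (simp add: wf_step_def)

lemma wf_step_supported: "A \<notin> greatest_unsupported P G \<Longrightarrow> wf_step P G A = Phi P G A"
  by (simp add: wf_step_def)

lemma wf_step_Tv_iff: "wf_step P G A = Tv \<longleftrightarrow> Phi P G A = Tv"
  using Phi_on_unsupported[OF unsupported_greatest[of P G], of A] by (auto simp: wf_step_def)

lemma hseq_Fv_eq_wf_step_iterate: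
  assumes "finite P"
  shows "hseq four_facts (four_rules P) (\<lambda>_. Fv) n = (wf_step P ^^ n) (\<lambda>_. Uv)"
proof (induction n)
  case (Suc n)
  let ?G = "(wf_step P ^^ n) (\<lambda>_. Uv)"
  have no_Ov: "?G A \<noteq> Ov" for A
    by (cases n) (simp_all add: wf_step_ne_Ov)
  have "hseq four_facts (four_rules P) (\<lambda>_. Fv) (Suc n) =
    joink_i (Phi P ?G) (false_on (greatest_unsupported P ?G))"
    by (simp add: Suc.IH T_R_four_rules[OF assms no_Ov] support_Fv[OF assms no_Ov])
  also have "\<dots> = wf_step P ?G"
  proof
    fix A
    have "\<forall>A\<in>greatest_unsupported P ?G. Phi P ?G A = Uv \<or> Phi P ?G A = Fv"
      using Phi_on_unsupported[OF unsupported_greatest[of P ?G]] by blast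
    then show "joink_i (Phi P ?G) (false_on (greatest_unsupported P ?G)) A = wf_step P ?G A"
      by (cases "A \<in> greatest_unsupported P ?G")
        (simp_all add: joink_i_false_on wf_step_unsupported wf_step_supported)
  qed
  finally show ?case
    by simp
qed (simp add: four_facts_def)

lemma greatest_unsupported_wf_step:
  assumes le: "le_i G (wf_step P G)"
  shows "greatest_unsupported P G \<subseteq> greatest_unsupported P (wf_step P G)"
proof (rule unsupported_subset_greatest)
  let ?G' = "wf_step P G" and ?S = "greatest_unsupported P G"
  have "le_i (\<lambda>B. if B \<in> ?S then Fv else G B) (\<lambda>B. if B \<in> ?S then Fv else ?G' B)"
    using le by (auto simp: le_i_def)
  from le_iD[OF Phi_mono[OF this]]
  have "Phi P (\<lambda>B. if B \<in> ?S then Fv else ?G' B) A = Fv" if "A \<in> ?S \<inter> fst ` P" for A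
    using unsupported_greatest[of P G] that by (simp add: unsupported_def)
  then show "unsupported P ?G' ?S"
    by (simp add: unsupported_def wf_step_unsupported)
qed

lemma wf_step_increasing:
  assumes le: "le_i G (wf_step P G)"
  shows "le_i (wf_step P G) (wf_step P (wf_step P G))"
  unfolding le_i_def
proof (intro allI impI)
  let ?G' = "wf_step P G"
  fix A
  assume defined: "?G' A \<noteq> Uv"
  show "?G' A = wf_step P ?G' A"
  proof (cases "A \<in> greatest_unsupported P G")
    case True
    with greatest_unsupported_wf_step[OF le] show ?thesis
      by (auto simp: wf_step_unsupported)
  next
    case False
    then have "?G' A = Phi P G A"
      by (rule wf_step_supported)
    with defined le_iD[OF Phi_mono[OF le]] have "Phi P ?G' A = ?G' A"
      by simp
    moreover have "Phi P ?G' A = Uv \<or> Phi P ?G' A = Fv" if "A \<in> greatest_unsupported P ?G'"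
      using Phi_on_unsupported[OF unsupported_greatest that] .
    ultimately show ?thesis
      using defined by (cases "A \<in> greatest_unsupported P ?G'")
        (auto simp: wf_step_unsupported wf_step_supported)
  qed
qed

lemma wf_step_nonhead:
  assumes "A \<notin> fst ` P" and "G A = Uv \<or> G A = Fv"
  shows "wf_step P G A = Fv"
proof -
  have "unsupported P G {A}"
    using assms by (simp add: unsupported_def)
  then have "A \<in> greatest_unsupported P G"
    by (auto dest: unsupported_subset_greatest)
  then show ?thesis
    by (rule wf_step_unsupported)
qed

lemma wf_step_iterate_nonhead: "A \<notin> fst ` P \<Longrightarrow> (wf_step P ^^ Suc n) (\<lambda>_. Uv) A = Fv"
  by (induction n) (simp_all add: wf_step_nonhead)

lemma neg4_eq_Tv_iff [simp]: "neg4 x = Tv \<longleftrightarrow> x = Fv"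
  by (cases x) auto

lemma neg4_eq_Fv_iff [simp]: "neg4 x = Fv \<longleftrightarrow> x = Tv"
  by (cases x) auto

lemma Pos_in_to_partial_iff [simp]: "Pos A \<in> to_partial G \<longleftrightarrow> G A = Tv"
  by (simp add: to_partial_def)

lemma NegL_in_to_partial_iff [simp]: "NegL A \<in> to_partial G \<longleftrightarrow> G A = Fv"
  by (simp add: to_partial_def)

lemma lit_in_to_partial_iff: "L \<in> to_partial G \<longleftrightarrow> lit_val G L = Tv"
  by (cases L) (auto simp: to_partial_def lit_val_def)

lemma neg_lit_in_to_partial_iff: "neg_lit L \<in> to_partial G \<longleftrightarrow> lit_val G L = Fv"
  by (cases L) (auto simp: to_partial_def lit_val_def)

lemma unfoundedD:
  "unfounded P I U \<Longrightarrow> A \<in> U \<Longrightarrow> (A, b) \<in> P \<Longrightarrow>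
    \<exists>L\<in>set b. neg_lit L \<in> I \<or> (\<exists>B. L = Pos B \<and> B \<in> U)"
  by (simp add: unfounded_def)

lemma UP_unfounded: "unfounded P I (UP P I)"
  unfolding unfounded_def UP_def by blast

lemma unfounded_subset_UP: "unfounded P I U \<Longrightarrow> U \<subseteq> UP P I"
  unfolding UP_def by blast

lemma WP_mono: "mono (WP P)"
proof (rule monoI)
  fix I I' :: "'a lit set"
  assume "I \<subseteq> I'"
  then have "TP P I \<subseteq> TP P I'" and "unfounded P I' (UP P I)"
    using UP_unfounded[of P I] unfolding TP_def unfounded_def by blast+
  then show "WP P I \<subseteq> WP P I'"
    unfolding WP_def using unfounded_subset_UP by blast
qed

lemma unsupported_imp_unfounded:
  assumes "unsupported P G S"
  shows "unfounded P (to_partial G) S"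
  unfolding unfounded_def
proof (intro ballI allI impI)
  fix A b
  assume "A \<in> S" and rule: "(A, b) \<in> P"
  with assms have "Phi P (\<lambda>B. if B \<in> S then Fv else G B) A = Fv"
    by (force simp: unsupported_def)
  with rule obtain L where L: "L \<in> set b" "lit_val (\<lambda>B. if B \<in> S then Fv else G B) L = Fv"
    by (auto simp: Phi_Fv_iff body_false_def)
  have "neg_lit L \<in> to_partial G \<or> (\<exists>B. L = Pos B \<and> B \<in> S)"
  proof (cases L)
    case (Pos B)
    with L(2) show ?thesis
      by (auto simp: lit_val_def split: if_splits)
  next
    case (NegL B)
    with L(2) show ?thesis
      by (auto simp: lit_val_def split: if_splits)
  qed
  with L(1) show "\<exists>L\<in>set b. neg_lit L \<in> to_partial G \<or> (\<exists>B. L = Pos B \<and> B \<in> S)"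
    by blast
qed

lemma unfounded_imp_unsupported:
  assumes unfounded: "unfounded P (to_partial G) S" and on_S: "\<forall>A\<in>S. G A = Uv \<or> G A = Fv"
  shows "unsupported P G S"
  unfolding unsupported_def
proof (intro conjI ballI)
  show "G A = Uv \<or> G A = Fv" if "A \<in> S" for A
    using on_S that by blast
next
  let ?G' = "\<lambda>B. if B \<in> S then Fv else G B"
  fix A
  assume "A \<in> S \<inter> fst ` P"
  have "body_false ?G' b" if rule: "(A, b) \<in> P" for b
  proof -
    obtain L where L: "L \<in> set b"
      and reason: "neg_lit L \<in> to_partial G \<or> (\<exists>B. L = Pos B \<and> B \<in> S)"
      using unfoundedD[OF unfounded _ rule] \<open>A \<in> S \<inter> fst ` P\<close> by blast
    have "le_i G ?G'"
      using on_S by (auto simp: le_i_def)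
    from reason have "lit_val ?G' L = Fv"
      using lit_val_mono[OF \<open>le_i G ?G'\<close>, of L]
      by (auto simp: neg_lit_in_to_partial_iff lit_val_def)
    with L show ?thesis
      by (auto simp: body_false_def)
  qed
  with \<open>A \<in> S \<inter> fst ` P\<close> show "Phi P ?G' A = Fv"
    by (force simp: Phi_Fv_iff)
qed

lemma Phi_Fv_unfounded: "Phi P G A = Fv \<Longrightarrow> unfounded P (to_partial G) {A}"
  by (auto simp: unfounded_def Phi_Fv_iff body_false_def neg_lit_in_to_partial_iff)

lemma to_partial_wf_step_subset: "to_partial (wf_step P G) \<subseteq> WP P (to_partial G)"
proof
  fix L
  assume "L \<in> to_partial (wf_step P G)"
  then consider (pos) A where "L = Pos A" "wf_step P G A = Tv"
    | (neg) A where "L = NegL A" "wf_step P G A = Fv"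
    unfolding to_partial_def by blast
  then show "L \<in> WP P (to_partial G)"
  proof cases
    case pos
    then obtain b where "(A, b) \<in> P" "body_true G b"
      by (auto simp: wf_step_Tv_iff Phi_Tv_iff)
    then have "A \<in> TP P (to_partial G)"
      unfolding TP_def body_true_def lit_in_to_partial_iff by blast
    with pos show ?thesis
      by (simp add: WP_def)
  next
    case neg
    then have "A \<in> greatest_unsupported P G \<or> Phi P G A = Fv"
      by (cases "A \<in> greatest_unsupported P G") (simp_all add: wf_step_supported)
    then have "A \<in> UP P (to_partial G)"
    proof
      assume "A \<in> greatest_unsupported P G"
      with unfounded_subset_UP[OF unsupported_imp_unfounded[OF unsupported_greatest[of P G]]]
      show ?thesis
        by (rule subsetD)
    next
      assume "Phi P G A = Fv"
      then show ?thesis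
        using unfounded_subset_UP[OF Phi_Fv_unfounded[of P G A]] by simp
    qed
    with neg show ?thesis
      by (simp add: WP_def)
  qed
qed

lemma wf_step_iterate_subset_wfs: "to_partial ((wf_step P ^^ n) (\<lambda>_. Uv)) \<subseteq> wfs P"
proof (induction n)
  case (Suc n)
  have "to_partial ((wf_step P ^^ Suc n) (\<lambda>_. Uv)) \<subseteq> WP P (to_partial ((wf_step P ^^ n) (\<lambda>_. Uv)))"
    by (simp add: to_partial_wf_step_subset)
  also have "\<dots> \<subseteq> WP P (wfs P)"
    using monoD[OF WP_mono Suc.IH] .
  also have "\<dots> = wfs P"
    unfolding wfs_def by (rule lfp_fixpoint[OF WP_mono])
  finally show ?case .
qed (simp add: to_partial_def)

text \<open>The body that made an atom true has no literal false in \<open>M\<close> and, by induction, no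
  positive literal in the greatest unfounded set of \<open>M\<close>.\<close>
lemma wf_step_iterate_true_not_in_UP:
  assumes upper: "\<And>m. le_i ((wf_step P ^^ m) (\<lambda>_. Uv)) M"
  shows "(wf_step P ^^ n) (\<lambda>_. Uv) A = Tv \<Longrightarrow> A \<notin> UP P (to_partial M)"
proof (induction n arbitrary: A)
  case (Suc n)
  let ?G = "(wf_step P ^^ n) (\<lambda>_. Uv)"
  obtain b where b: "(A, b) \<in> P" "body_true ?G b"
    using Suc.prems by (auto simp: wf_step_Tv_iff Phi_Tv_iff)
  have "body_true M b"
    using body_true_mono[OF upper b(2)] .
  show ?case
  proof
    assume "A \<in> UP P (to_partial M)"
    then obtain L where L: "L \<in> set b"
      and "neg_lit L \<in> to_partial M \<or> (\<exists>B. L = Pos B \<and> B \<in> UP P (to_partial M))"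
      using unfoundedD[OF UP_unfounded \<open>A \<in> UP P (to_partial M)\<close> b(1)] by blast
    then show False
    proof (elim disjE exE conjE)
      assume "neg_lit L \<in> to_partial M"
      with \<open>body_true M b\<close> L show False
        by (simp add: neg_lit_in_to_partial_iff body_true_def)
    next
      fix B
      assume "L = Pos B" and "B \<in> UP P (to_partial M)"
      moreover have "?G B = Tv"
        using b(2) L \<open>L = Pos B\<close> by (auto simp: body_true_def lit_val_def)
      ultimately show False
        using Suc.IH[of B] by simp
    qed
  qed
qed simp

lemma wfs_subset_to_partial:
  assumes fixpoint: "wf_step P M = M" and no_Ov: "\<And>A. M A \<noteq> Ov"
    and founded: "\<And>A. M A = Tv \<Longrightarrow> A \<notin> UP P (to_partial M)"
  shows "wfs P \<subseteq> to_partial M"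
  unfolding wfs_def
proof (rule lfp_lowerbound)
  let ?X = "to_partial M"
  have "Pos A \<in> ?X" if "A \<in> TP P ?X" for A
  proof -
    from that obtain b where "(A, b) \<in> P" "body_true M b"
      by (auto simp: TP_def body_true_def lit_in_to_partial_iff)
    then have "wf_step P M A = Tv"
      by (auto simp: wf_step_Tv_iff Phi_Tv_iff)
    with fixpoint show ?thesis
      by (simp add: to_partial_def)
  qed
  moreover have "NegL A \<in> ?X" if "A \<in> UP P ?X" for A
  proof -
    have "\<forall>B\<in>UP P ?X. M B = Uv \<or> M B = Fv"
    proof
      fix B
      assume "B \<in> UP P ?X"
      with founded[of B] no_Ov[of B] show "M B = Uv \<or> M B = Fv"
        by (cases "M B") auto
    qed
    then have "unsupported P M (UP P ?X)"
      by (intro unfounded_imp_unsupported UP_unfounded)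
    with that have "wf_step P M A = Fv"
      by (auto intro: wf_step_unsupported dest: unsupported_subset_greatest)
    with fixpoint show ?thesis
      by (simp add: to_partial_def)
  qed
  ultimately show "WP P ?X \<subseteq> ?X"
    by (auto simp: WP_def)
qed

lemma hsem_Fv_eq_wfs:
  assumes "finite P"
  shows "(\<forall>A. hsem four_facts (four_rules P) (\<lambda>_. Fv) A \<noteq> Ov)
    \<and> to_partial (hsem four_facts (four_rules P) (\<lambda>_. Fv)) = wfs P"
proof -
  let ?f = "\<lambda>n. (wf_step P ^^ n) (\<lambda>_. Uv)"
  have chain: "le_i (?f n) (?f (Suc n))" for n
    by (rule funpow_le_i_chain) (simp_all add: wf_step_increasing)
  have "(wf_step P ^^ Suc n) (\<lambda>_. Uv) A = wf_step P (\<lambda>_. Uv) A" if "A \<notin> fst ` P" for n A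
    using wf_step_iterate_nonhead[OF that, of n] wf_step_iterate_nonhead[OF that, of 0] by simp
  with chain obtain N where fixpoint: "wf_step P (?f N) = ?f N"
    using funpow_le_i_reaches_fixpoint[where D = "fst ` P"] assms by blast
  have upper: "le_i (?f m) (?f N)" for m
    using funpow_le_i_fixpoint_upper[OF chain fixpoint] .
  have hsem: "hsem four_facts (four_rules P) (\<lambda>_. Fv) = ?f N"
    using hsem_eq_upper_stage[of four_facts "four_rules P" "\<lambda>_. Fv" N] upper
    by (simp add: hseq_Fv_eq_wf_step_iterate[OF assms])
  have no_Ov: "?f N A \<noteq> Ov" for A
    by (cases N) (simp_all add: wf_step_ne_Ov)
  have "wfs P \<subseteq> to_partial (?f N)"
    using fixpoint no_Ov wf_step_iterate_true_not_in_UP[OF upper] by (rule wfs_subset_to_partial)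
  with wf_step_iterate_subset_wfs[of N P] hsem no_Ov show ?thesis
    by auto
qed

theorem theorem2:
  fixes P :: "('a \<times> 'a lit list) set"
  assumes "finite P"
  shows "((\<forall>A. hsem four_facts (four_rules P) (\<lambda>_. Fv) A \<noteq> Ov)
           \<and> to_partial (hsem four_facts (four_rules P) (\<lambda>_. Fv)) = wfs P)
         \<and> hsem four_facts (four_rules P) (\<lambda>_. Uv) = kk P"
  using hsem_Fv_eq_wfs[OF assms] hsem_Uv_eq_kk[OF assms] by blast

end
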